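(* There is an absolute constant $C$ such that the following holds. Let $\mu=\sum_{\ell=1}^k\alpha_\ell\mu_\ell$ be a mixture of $c$-isoperimetric probability measures on $\mathbb R^d$ ($\alpha_\ell\ge0$, $\sum\alpha_\ell=1$). Let $\mathcal F$ be a finite class of $L$-Lipschitz functions $f:\mathbb R^d\to\mathbb R$ with $|f(x)|\le1$ for all $f\in\mathcal F$, $x\in\mathbb R^d$. Then \[ \mathrm{Rad}_{n,\mu}(\mathcal F)\le C\max\Big(\sqrt{\tfrac kn},\ L\sqrt{\tfrac{c\log|\mathcal F|}{nd}}\Big). \]
   Context: $\mathrm{Rad}_{n,\mu}(\mathcal F)=\frac1n\mathbb E\big[\sup_{f\in\mathcal F}\big|\sum_{i=1}^n\sigma_if(x_i)\big|\big]$, where $\sigma_1,\dots,\sigma_n$ are i.i.d. uniform in $\{-1,1\}$ and $x_1,\dots,x_n$ are i.i.d. from $\mu$, independent of the $\sigma_i$. A probability measure $\nu$ on $\mathbb R^d$ satisfies $c$-isoperimetry if for every bounded $L$-Lipschitz $f:\mathbb R^d\to\mathbb R$ and every $t\ge0$, $\mathbb P_{x\sim\nu}[|f(x)-\mathbb E_\nu f|\ge t]\le 2e^{-dt^2/(2cL^2)}$. *)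

theory Defs
  imports "HOL-Probability.Probability"
begin

text \<open>R^d is encoded as functions nat => real on the index set {..<d}
 (extensional outside), with the product Borel sigma algebra.\<close>

definition Rd :: "nat \<Rightarrow> (nat \<Rightarrow> real) measure" where
  "Rd d = PiM {..<d} (\<lambda>_. lborel)"

definition edist :: "nat \<Rightarrow> (nat \<Rightarrow> real) \<Rightarrow> (nat \<Rightarrow> real) \<Rightarrow> real" where
  "edist d x y = sqrt (\<Sum>i<d. (x i - y i)^2)"

definition lipschitz_Rd :: "nat \<Rightarrow> real \<Rightarrow> ((nat \<Rightarrow> real) \<Rightarrow> real) \<Rightarrow> bool" where
  "lipschitz_Rd d L f \<longleftrightarrow>
     (\<forall>x\<in>space (Rd d). \<forall>y\<in>space (Rd d). \<bar>f x - f y\<bar> \<le> L * edist d x y)"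

definition isoperimetric :: "nat \<Rightarrow> real \<Rightarrow> (nat \<Rightarrow> real) measure \<Rightarrow> bool" where
  "isoperimetric d c \<nu> \<longleftrightarrow> prob_space \<nu> \<and> sets \<nu> = sets (Rd d) \<and>
     (\<forall>f L t. f \<in> borel_measurable (Rd d) \<and> (\<exists>B. \<forall>x\<in>space (Rd d). \<bar>f x\<bar> \<le> B)
        \<and> L > 0 \<and> lipschitz_Rd d L f \<and> t \<ge> 0 \<longrightarrow>
        measure \<nu> {x \<in> space \<nu>. \<bar>f x - (\<integral>y. f y \<partial>\<nu>)\<bar> \<ge> t}
          \<le> 2 * exp (- (real d * t^2) / (2 * c * L^2)))"

definition rad :: "nat \<Rightarrow> (nat \<Rightarrow> real) measure \<Rightarrow> ((nat \<Rightarrow> real) \<Rightarrow> real) set \<Rightarrow> real" where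
  "rad n \<mu> F = (1 / real n) *
     (\<integral>xs. (\<Sum>\<sigma>\<in>PiE {..<n} (\<lambda>_. {-1, 1::real}).
               Max ((\<lambda>f. \<bar>\<Sum>i<n. \<sigma> i * f (xs i)\<bar>) ` F)) / 2 ^ n
        \<partial>(PiM {..<n} (\<lambda>_. \<mu>)))"

end

theory Submission
  imports Defs "HOL-Real_Asymp.Real_Asymp"
begin

text \<open>Write each sample point as drawn from a mixture component chosen by a label; after
  conditioning on the labels the points are independent, the i-th one drawn from the
  component of its label. Subtracting from f(x_i) the mean of f under that component splits
  the Rademacher sum into two parts. The means contribute at most the sum, over the k labels,
  of the absolute Rademacher sum of the points carrying that label, whose expectation is
  O(sqrt(kn)). The centred parts are sub-Gaussian with variance proxy cL^2/d by
  isoperimetry, so their exponential moments factorise over the independent points and over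
  the signs; the usual log-sum-exp bound on a maximum of |F| such sums then yields
  O(L sqrt(n c log|F| / d)).\<close>

section \<open>Averages over sign vectors\<close>

definition sign_vectors :: "nat \<Rightarrow> (nat \<Rightarrow> real) set" where
  "sign_vectors n = PiE {..<n} (\<lambda>_. {-1, 1})"

lemma finite_sign_vectors [simp]: "finite (sign_vectors n)"
  unfolding sign_vectors_def by (intro finite_PiE) auto

lemma card_sign_vectors: "card (sign_vectors n) = 2 ^ n"
  unfolding sign_vectors_def by (subst card_PiE) (auto simp: numeral_2_eq_2)

lemma sum_sign_vectors_exp:
  "(\<Sum>\<sigma>\<in>sign_vectors n. exp (\<Sum>i<n. \<sigma> i * b i)) = 2 ^ n * (\<Prod>i<n. cosh (b i))"
proof -
  have "2 ^ n * (\<Prod>i<n. cosh (b i)) = (\<Prod>i<n. 2 * cosh (b i))"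
    by (simp add: prod.distrib)
  also have "\<dots> = (\<Prod>i<n. \<Sum>s\<in>{-1, 1::real}. exp (s * b i))"
    by (intro prod.cong refl) (simp add: cosh_field_def)
  also have "\<dots> = (\<Sum>\<sigma>\<in>sign_vectors n. \<Prod>i<n. exp (\<sigma> i * b i))"
    unfolding sign_vectors_def by (rule prod_sum_PiE) auto
  finally show ?thesis
    by (simp add: exp_sum)
qed

lemma cosh_le_exp_square_half:
  fixes x :: real
  shows "cosh x \<le> exp (x\<^sup>2 / 2)"
proof -
  let ?p = "pmf_of_set {-1, 1::real}"
  interpret interval_bounded_random_variable "measure_pmf ?p" "\<lambda>s. s" "-1" "1"
    by unfold_locales (auto simp: AE_measure_pmf_iff)
  have mean: "measure_pmf.expectation ?p (\<lambda>s. s) = 0"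
    by (subst integral_pmf_of_set) auto
  have "cosh \<bar>x\<bar> \<le> exp (\<bar>x\<bar>\<^sup>2 / 2)" if "x \<noteq> 0"
  proof -
    have "(\<integral>\<^sup>+s. exp (\<bar>x\<bar> * s) \<partial>?p) = ennreal (exp \<bar>x\<bar> + exp (- \<bar>x\<bar>)) / 2"
      by (subst nn_integral_pmf_of_set)
         (auto simp: ennreal_plus[symmetric] add.commute simp del: ennreal_plus)
    also have "\<dots> = ennreal (cosh \<bar>x\<bar>)"
      using divide_ennreal[of "exp \<bar>x\<bar> + exp (- \<bar>x\<bar>)" 2] by (simp add: cosh_field_def)
    finally have "(\<integral>\<^sup>+s. exp (\<bar>x\<bar> * s) \<partial>?p) = ennreal (cosh \<bar>x\<bar>)" .
    moreover have "(\<integral>\<^sup>+s. exp (\<bar>x\<bar> * s) \<partial>?p) \<le> ennreal (exp (\<bar>x\<bar>\<^sup>2 * (1 - -1)\<^sup>2 / 8))"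
      using that by (intro Hoeffdings_lemma_nn_integral_0 mean) auto
    ultimately show ?thesis
      by (simp add: power2_eq_square)
  qed
  then show ?thesis
    by (cases "x = 0") auto
qed

lemma prod_cosh_le_exp_sum_squares:
  "(\<Prod>i\<in>I. cosh (b i :: real)) \<le> exp ((\<Sum>i\<in>I. (b i)\<^sup>2) / 2)"
proof -
  have "(\<Prod>i\<in>I. cosh (b i)) \<le> (\<Prod>i\<in>I. exp ((b i)\<^sup>2 / 2))"
    by (intro prod_mono conjI cosh_le_exp_square_half) (auto intro: order.trans[OF _ cosh_real_ge_1])
  then show ?thesis
    by (cases "finite I") (simp_all add: exp_sum sum_divide_distrib)
qed

text \<open>\<open>ln (S / W) \<le> S / W - 1\<close> replaces the logarithm of the exponential sum \<open>S\<close> by \<open>S\<close>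
  itself, which is linear and can therefore be averaged over the signs.\<close>

lemma Max_abs_le_sum_exp:
  fixes Y :: "'j \<Rightarrow> real"
  assumes "finite J" "J \<noteq> {}" "l > 0" "W > 0"
  shows "Max ((\<lambda>j. \<bar>Y j\<bar>) ` J)
           \<le> (ln W - 1) / l + (\<Sum>j\<in>J. exp (l * Y j) + exp (- (l * Y j))) / (l * W)"
proof -
  let ?S = "\<Sum>j\<in>J. exp (l * Y j) + exp (- (l * Y j))"
  obtain j0 where j0: "j0 \<in> J" "Max ((\<lambda>j. \<bar>Y j\<bar>) ` J) = \<bar>Y j0\<bar>"
    using assms by (metis (no_types, lifting) Max_in finite_imageI image_iff image_is_empty)
  have "exp (l * \<bar>Y j0\<bar>) \<le> exp (l * Y j0) + exp (- (l * Y j0))"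
    by (cases "Y j0 \<ge> 0") auto
  also have "\<dots> \<le> ?S"
    using j0 assms by (intro member_le_sum[where f = "\<lambda>j. exp (l * Y j) + exp (- (l * Y j))"]) auto
  finally have exp_le: "exp (l * \<bar>Y j0\<bar>) \<le> ?S" .
  have S_pos: "?S > 0"
    using assms by (intro sum_pos add_pos_pos) auto
  from exp_le have "l * \<bar>Y j0\<bar> \<le> ln ?S"
    by (metis exp_gt_zero ln_exp ln_le_cancel_iff order.strict_trans2)
  also have "\<dots> = ln W + ln (?S / W)"
    using assms S_pos by (simp add: ln_div)
  also have "ln (?S / W) \<le> ?S / W - 1"
    using assms S_pos by (intro ln_le_minus_one divide_pos_pos) auto
  finally have "l * \<bar>Y j0\<bar> \<le> ln W - 1 + ?S / W"
    by simp
  then have "\<bar>Y j0\<bar> \<le> (ln W - 1 + ?S / W) / l"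
    using assms by (simp add: pos_le_divide_eq mult.commute)
  also have "\<dots> = (ln W - 1) / l + ?S / (l * W)"
    using assms by (simp add: field_simps)
  finally show ?thesis
    using j0 by simp
qed

lemma sum_sign_vectors_Max_abs_le:
  fixes B :: "'j \<Rightarrow> nat \<Rightarrow> real"
  assumes J: "finite J" "J \<noteq> {}" and l: "l > 0" and W: "W > 0"
  shows "(\<Sum>\<sigma>\<in>sign_vectors n. Max ((\<lambda>j. \<bar>\<Sum>i<n. \<sigma> i * B j i\<bar>) ` J)) / 2 ^ n
          \<le> (ln W - 1) / l + 2 * (\<Sum>j\<in>J. \<Prod>i<n. cosh (l * B j i)) / (l * W)"
proof -
  have exp_pos: "(\<Sum>\<sigma>\<in>sign_vectors n. exp (l * (\<Sum>i<n. \<sigma> i * B j i)))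
      = 2 ^ n * (\<Prod>i<n. cosh (l * B j i))" for j
    using sum_sign_vectors_exp[where n=n and b="\<lambda>i. l * B j i"]
    by (simp add: sum_distrib_left algebra_simps)
  have exp_neg: "(\<Sum>\<sigma>\<in>sign_vectors n. exp (- (l * (\<Sum>i<n. \<sigma> i * B j i))))
      = 2 ^ n * (\<Prod>i<n. cosh (l * B j i))" for j
    using sum_sign_vectors_exp[where n=n and b="\<lambda>i. - (l * B j i)"]
    by (simp add: sum_distrib_left sum_negf[symmetric] algebra_simps)
  have "(\<Sum>\<sigma>\<in>sign_vectors n. Max ((\<lambda>j. \<bar>\<Sum>i<n. \<sigma> i * B j i\<bar>) ` J))
      \<le> (\<Sum>\<sigma>\<in>sign_vectors n. (ln W - 1) / l
           + (\<Sum>j\<in>J. exp (l * (\<Sum>i<n. \<sigma> i * B j i)) + exp (- (l * (\<Sum>i<n. \<sigma> i * B j i)))) / (l * W))"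
    using Max_abs_le_sum_exp[OF J l W] by (intro sum_mono) simp
  also have "\<dots> = 2 ^ n * ((ln W - 1) / l) + (\<Sum>j\<in>J.
        (\<Sum>\<sigma>\<in>sign_vectors n. exp (l * (\<Sum>i<n. \<sigma> i * B j i)))
      + (\<Sum>\<sigma>\<in>sign_vectors n. exp (- (l * (\<Sum>i<n. \<sigma> i * B j i))))) / (l * W)"
    by (simp add: sum.distrib card_sign_vectors sum_divide_distrib[symmetric]
        sum.swap[of _ "sign_vectors n" J])
  also have "\<dots> = 2 ^ n * ((ln W - 1) / l + 2 * (\<Sum>j\<in>J. \<Prod>i<n. cosh (l * B j i)) / (l * W))"
    by (simp add: exp_pos exp_neg sum_distrib_left[symmetric] algebra_simps)
  finally show ?thesis
    by (simp add: field_simps)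
qed

lemma sum_sign_vectors_abs_le:
  assumes l: "l > 0" and V: "(\<Sum>i<n. (b i)\<^sup>2) \<le> V"
  shows "(\<Sum>\<sigma>\<in>sign_vectors n. \<bar>\<Sum>i<n. \<sigma> i * b i\<bar>) / 2 ^ n \<le> (ln 2 + l\<^sup>2 * V / 2) / l"
proof -
  define W where "W = 2 * exp (l\<^sup>2 * V / 2)"
  have W: "W > 0"
    by (simp add: W_def)
  have "(\<Prod>i<n. cosh (l * b i)) \<le> exp ((\<Sum>i<n. (l * b i)\<^sup>2) / 2)"
    by (rule prod_cosh_le_exp_sum_squares)
  also have "\<dots> \<le> exp (l\<^sup>2 * V / 2)"
    using V by (simp add: power_mult_distrib sum_distrib_left[symmetric] mult_left_mono)
  finally have cosh_le: "(\<Prod>i<n. cosh (l * b i)) \<le> exp (l\<^sup>2 * V / 2)" .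
  have "(\<Sum>\<sigma>\<in>sign_vectors n. \<bar>\<Sum>i<n. \<sigma> i * b i\<bar>) / 2 ^ n
      = (\<Sum>\<sigma>\<in>sign_vectors n. Max ((\<lambda>j. \<bar>\<Sum>i<n. \<sigma> i * (\<lambda>_::unit. b) j i\<bar>) ` {()})) / 2 ^ n"
    by simp
  also have "\<dots> \<le> (ln W - 1) / l + 2 * (\<Prod>i<n. cosh (l * b i)) / (l * W)"
    using sum_sign_vectors_Max_abs_le[where J="{()}" and B="\<lambda>_::unit. b" and n=n and l=l and W=W] l W
    by simp
  also have "\<dots> \<le> (ln W - 1) / l + 2 * exp (l\<^sup>2 * V / 2) / (l * W)"
    using l W cosh_le by (intro add_left_mono divide_right_mono mult_left_mono) auto
  also have "\<dots> = (ln 2 + l\<^sup>2 * V / 2) / l"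
    using l by (simp add: W_def ln_mult field_simps)
  finally show ?thesis .
qed

lemma sum_sign_vectors_abs_le_sqrt:
  assumes n: "n \<ge> 1" and V: "(\<Sum>i<n. (b i)\<^sup>2) \<le> real n"
  shows "(\<Sum>\<sigma>\<in>sign_vectors n. \<bar>\<Sum>i<n. \<sigma> i * b i\<bar>) / 2 ^ n \<le> 2 * sqrt (real n)"
proof -
  define l where "l = 1 / sqrt (real n)"
  have l: "l > 0"
    using n by (simp add: l_def)
  have "(\<Sum>\<sigma>\<in>sign_vectors n. \<bar>\<Sum>i<n. \<sigma> i * b i\<bar>) / 2 ^ n \<le> (ln 2 + l\<^sup>2 * real n / 2) / l"
    by (rule sum_sign_vectors_abs_le[OF l V])
  also have "\<dots> = sqrt (real n) * (ln 2 + 1 / 2)"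
    using n by (simp add: l_def power_divide field_simps)
  also have "\<dots> \<le> sqrt (real n) * 2"
    using ln_2_less_1 by (intro mult_left_mono) auto
  finally show ?thesis
    by simp
qed

lemma sum_sign_vectors_class_sums_le:
  assumes lab: "\<And>i. i < n \<Longrightarrow> lab i \<in> {1..k}" and n: "n \<ge> 1" and k: "k \<ge> 1"
  shows "(\<Sum>\<sigma>\<in>sign_vectors n. \<Sum>q=1..k. \<bar>\<Sum>i<n. \<sigma> i * of_bool (lab i = q)\<bar>) / 2 ^ n
           \<le> 2 * sqrt (real k * real n)"
proof -
  define l where "l = sqrt (real k / real n)"
  have l: "l > 0"
    using n k by (simp add: l_def)
  have "(\<Sum>q=1..k. of_bool (lab i = q)) = (1::real)" if "i < n" for i
    using lab[OF that] by (simp add: of_bool_def sum.delta')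
  then have class_sizes: "(\<Sum>q=1..k. \<Sum>i<n. of_bool (lab i = q)) = real n"
    by (subst sum.swap) (simp del: sum_of_bool_eq)
  have "(\<Sum>\<sigma>\<in>sign_vectors n. \<Sum>q=1..k. \<bar>\<Sum>i<n. \<sigma> i * of_bool (lab i = q)\<bar>) / 2 ^ n
     = (\<Sum>q=1..k. (\<Sum>\<sigma>\<in>sign_vectors n. \<bar>\<Sum>i<n. \<sigma> i * of_bool (lab i = q)\<bar>) / 2 ^ n)"
    by (simp add: sum.swap[of _ "sign_vectors n"] sum_divide_distrib)
  also have "\<dots> \<le> (\<Sum>q=1..k. (ln 2 + l\<^sup>2 * (\<Sum>i<n. of_bool (lab i = q)) / 2) / l)"
    by (intro sum_mono sum_sign_vectors_abs_le l) simp
  also have "\<dots> = (real k * ln 2 + l\<^sup>2 * (\<Sum>q=1..k. \<Sum>i<n. of_bool (lab i = q)) / 2) / l"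
    by (simp add: sum.distrib sum_divide_distrib[symmetric] sum_distrib_left[symmetric]
        add_divide_distrib del: sum_of_bool_eq)
  also have "\<dots> = (real k * ln 2 + l\<^sup>2 * real n / 2) / l"
    by (simp only: class_sizes)
  also have "\<dots> = sqrt (real k * real n) * (ln 2 + 1 / 2)"
  proof -
    have sqrt_k: "sqrt (real k) * (sqrt (real k) * x) = real k * x" for x
      by (simp add: mult.assoc[symmetric])
    show ?thesis
      using n k by (simp add: l_def real_sqrt_mult real_sqrt_divide power_divide field_simps sqrt_k)
  qed
  also have "\<dots> \<le> sqrt (real k * real n) * 2"
    using ln_2_less_1 by (intro mult_left_mono) auto
  finally show ?thesis
    by simp
qed

section \<open>Exponential moments from Gaussian tails\<close>

lemma borel_measurable_sinh [measurable (raw)]: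
  "f \<in> borel_measurable M \<Longrightarrow> (\<lambda>x. sinh (f x :: real)) \<in> borel_measurable M"
  by (erule measurable_compose[OF _ borel_measurable_continuous_onI[OF continuous_on_sinh[OF continuous_on_id]]])

lemma borel_measurable_cosh [measurable (raw)]:
  "f \<in> borel_measurable M \<Longrightarrow> (\<lambda>x. cosh (f x :: real)) \<in> borel_measurable M"
  by (erule measurable_compose[OF _ borel_measurable_continuous_onI[OF continuous_on_cosh[OF continuous_on_id]]])

lemma borel_measurable_indicator_abs_interval [measurable (raw)]:
  fixes Y :: "'a \<Rightarrow> real"
  assumes [measurable]: "Y \<in> borel_measurable N"
  shows "(\<lambda>p. indicator {0..\<bar>Y (fst p)\<bar>} (snd p) :: ennreal) \<in> borel_measurable (N \<Otimes>\<^sub>M lborel)"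
proof -
  have [measurable]: "(\<lambda>p. snd p :: real) \<in> borel_measurable (N \<Otimes>\<^sub>M lborel)"
    using measurable_snd[of N lborel] by (simp add: measurable_cong_sets[OF refl sets_lborel])
  have "(\<lambda>p. indicator {p \<in> space (N \<Otimes>\<^sub>M lborel). 0 \<le> snd p \<and> snd p \<le> \<bar>Y (fst p)\<bar>} p :: ennreal)
      \<in> borel_measurable (N \<Otimes>\<^sub>M lborel)"
    by measurable
  then show ?thesis
    by (rule measurable_cong[THEN iffD1, rotated]) (auto simp: indicator_def)
qed

lemma ennreal_cosh_eq_integral_sinh:
  fixes l y :: real
  assumes "l > 0"
  shows "ennreal (cosh (l * y)) = 1 + (\<integral>\<^sup>+t. ennreal (l * sinh (l * t)) * indicator {0..\<bar>y\<bar>} t \<partial>lborel)"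
proof -
  have "(\<integral>\<^sup>+t. ennreal (l * sinh (l * t)) * indicator {0..\<bar>y\<bar>} t \<partial>lborel)
      = ennreal (cosh (l * \<bar>y\<bar>) - cosh (l * 0))"
  proof (rule nn_integral_FTC_Icc)
    fix t assume "t \<in> {0..\<bar>y\<bar>}"
    then show "0 \<le> l * sinh (l * t)"
      using assms by (auto simp: sinh_real_nonneg_iff)
  qed (auto intro!: derivative_eq_intros)
  moreover have "cosh (l * \<bar>y\<bar>) = cosh (l * y)"
    using cosh_minus[of "l * y"] by (cases "y \<ge> 0") auto
  ultimately show ?thesis
    using cosh_real_ge_1[of "l * y"] ennreal_plus[of 1 "cosh (l * y) - 1"] by simp
qed

lemma nn_integral_cosh_eq_tail_integral:
  assumes "prob_space N" and Y[measurable]: "Y \<in> borel_measurable N" and l: "l > (0::real)"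
  shows "(\<integral>\<^sup>+x. ennreal (cosh (l * Y x)) \<partial>N)
       = 1 + (\<integral>\<^sup>+t. ennreal (l * sinh (l * t)) * indicator {0..} t
                   * emeasure N {x\<in>space N. t \<le> \<bar>Y x\<bar>} \<partial>lborel)"
proof -
  interpret prob_space N by fact
  interpret pair_sigma_finite N lborel by unfold_locales
  let ?g = "\<lambda>t::real. l * sinh (l * t)"
  have inner_measurable:
    "(\<lambda>x. \<integral>\<^sup>+t. ennreal (?g t) * indicator {0..\<bar>Y x\<bar>} t \<partial>lborel) \<in> borel_measurable N"
    by measurable
  have "(\<integral>\<^sup>+x. ennreal (cosh (l * Y x)) \<partial>N)
      = 1 + (\<integral>\<^sup>+x. (\<integral>\<^sup>+t. ennreal (?g t) * indicator {0..\<bar>Y x\<bar>} t \<partial>lborel) \<partial>N)"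
    using inner_measurable
    by (simp add: ennreal_cosh_eq_integral_sinh[OF l] nn_integral_add emeasure_space_1)
  also have "(\<integral>\<^sup>+x. (\<integral>\<^sup>+t. ennreal (?g t) * indicator {0..\<bar>Y x\<bar>} t \<partial>lborel) \<partial>N)
      = (\<integral>\<^sup>+t. (\<integral>\<^sup>+x. ennreal (?g t) * indicator {0..\<bar>Y x\<bar>} t \<partial>N) \<partial>lborel)"
    by (rule Fubini'[symmetric]) measurable
  also have "\<dots> = (\<integral>\<^sup>+t. ennreal (?g t) * indicator {0..} t * emeasure N {x\<in>space N. t \<le> \<bar>Y x\<bar>} \<partial>lborel)"
  proof (rule nn_integral_cong)
    fix t :: real
    have "(\<integral>\<^sup>+x. ennreal (?g t) * indicator {0..\<bar>Y x\<bar>} t \<partial>N)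
        = (\<integral>\<^sup>+x. (ennreal (?g t) * indicator {0..} t) * indicator {x\<in>space N. t \<le> \<bar>Y x\<bar>} x \<partial>N)"
      by (intro nn_integral_cong) (auto simp: indicator_def)
    also have "\<dots> = ennreal (?g t) * indicator {0..} t * emeasure N {x\<in>space N. t \<le> \<bar>Y x\<bar>}"
      by (rule nn_integral_cmult_indicator) measurable
    finally show "(\<integral>\<^sup>+x. ennreal (?g t) * indicator {0..\<bar>Y x\<bar>} t \<partial>N) = \<dots>" .
  qed
  finally show ?thesis .
qed

lemma nn_integral_mult_exp_neg_square:
  assumes s: "s > (0::real)"
  shows "(\<integral>\<^sup>+t. ennreal (t * exp (- t\<^sup>2 / (4 * s))) * indicator {0..} t \<partial>lborel) = ennreal (2 * s)"
proof -
  have "(\<integral>\<^sup>+t. ennreal (t * exp (- t\<^sup>2 / (4 * s))) * indicator {0..} t \<partial>lborel)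
      = ennreal (0 - (- 2 * s * exp (- 0\<^sup>2 / (4 * s))))"
  proof (rule nn_integral_FTC_atLeast)
    show "(\<lambda>t. t * exp (- t\<^sup>2 / (4 * s))) \<in> borel_measurable borel"
      using s by (intro borel_measurable_continuous_onI continuous_intros) auto
    show "((\<lambda>t. - 2 * s * exp (- t\<^sup>2 / (4 * s))) has_real_derivative x * exp (- x\<^sup>2 / (4 * s))) (at x)"
      for x
      using s by (auto intro!: derivative_eq_intros simp: field_simps power2_eq_square)
    show "((\<lambda>t. - 2 * s * exp (- t\<^sup>2 / (4 * s))) \<longlongrightarrow> 0) at_top"
      using s by real_asymp
  qed auto
  then show ?thesis
    by simp
qed

lemma sinh_le_mult_exp:
  assumes "u \<ge> (0::real)"
  shows "sinh u \<le> u * exp u"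
proof -
  have "exp u * (1 - exp (- (2 * u))) \<le> exp u * (2 * u)"
    using exp_ge_add_one_self[of "- (2 * u)"] by (intro mult_left_mono) auto
  moreover have "exp u * exp (- (2 * u)) = exp (- u)"
    by (simp add: exp_add[symmetric])
  ultimately show ?thesis
    by (simp add: sinh_field_def field_simps)
qed

text \<open>Completing the square, \<open>l t - t\<^sup>2/(2s) \<le> l\<^sup>2 s - t\<^sup>2/(4s)\<close>: half of the Gaussian
  decay absorbs the growth of \<open>sinh\<close>.\<close>

lemma sinh_mult_gaussian_tail_le:
  assumes l: "l > 0" and s: "s > (0::real)" and t: "t \<ge> 0"
  shows "l * sinh (l * t) * (2 * exp (- t\<^sup>2 / (2 * s)))
          \<le> 2 * l\<^sup>2 * exp (l\<^sup>2 * s) * (t * exp (- t\<^sup>2 / (4 * s)))"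
proof -
  have exponent: "l * t - t\<^sup>2 / (2 * s) \<le> l\<^sup>2 * s - t\<^sup>2 / (4 * s)"
  proof -
    have "0 \<le> (t - 2 * l * s)\<^sup>2 / (4 * s)"
      using s by simp
    also have "\<dots> = t\<^sup>2 / (4 * s) - l * t + l\<^sup>2 * s"
      using s by (simp add: power2_eq_square field_simps)
    finally show ?thesis
      by (simp add: field_simps)
  qed
  have "l * sinh (l * t) * (2 * exp (- t\<^sup>2 / (2 * s)))
      \<le> l * (l * t * exp (l * t)) * (2 * exp (- t\<^sup>2 / (2 * s)))"
    using l t sinh_le_mult_exp[of "l * t"] by (intro mult_right_mono mult_left_mono) auto
  also have "\<dots> = 2 * l\<^sup>2 * t * exp (l * t - t\<^sup>2 / (2 * s))"
    by (simp add: power2_eq_square exp_diff exp_minus field_simps)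
  also have "\<dots> \<le> 2 * l\<^sup>2 * t * exp (l\<^sup>2 * s - t\<^sup>2 / (4 * s))"
    using t exponent by (intro mult_left_mono) auto
  also have "\<dots> = 2 * l\<^sup>2 * exp (l\<^sup>2 * s) * (t * exp (- t\<^sup>2 / (4 * s)))"
    by (simp add: exp_diff exp_minus field_simps)
  finally show ?thesis .
qed

lemma one_plus_mult_exp_le_exp:
  assumes "u \<ge> (0::real)"
  shows "1 + 4 * u * exp u \<le> exp (5 * u)"
proof -
  have "1 + 4 * u * exp u \<le> (1 + 4 * u) * exp u"
    using assms by (simp add: algebra_simps)
  also have "\<dots> \<le> exp (4 * u) * exp u"
    using exp_ge_add_one_self[of "4 * u"] by (intro mult_right_mono) auto
  finally show ?thesis
    by (simp add: exp_add[symmetric])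
qed

lemma nn_integral_cosh_le_of_gaussian_tail:
  fixes Y :: "'a \<Rightarrow> real"
  assumes N: "prob_space N" and Y[measurable]: "Y \<in> borel_measurable N" and l: "l > 0" and s: "s > 0"
    and tail: "\<And>t. t \<ge> 0 \<Longrightarrow> emeasure N {x\<in>space N. t \<le> \<bar>Y x\<bar>} \<le> ennreal (2 * exp (- t\<^sup>2 / (2 * s)))"
  shows "(\<integral>\<^sup>+x. ennreal (cosh (l * Y x)) \<partial>N) \<le> ennreal (exp (5 * l\<^sup>2 * s))"
proof -
  define K where "K = 2 * l\<^sup>2 * exp (l\<^sup>2 * s)"
  have K: "K \<ge> 0"
    by (simp add: K_def)
  have integrand_le: "ennreal (l * sinh (l * t)) * indicator {0..} t * emeasure N {x\<in>space N. t \<le> \<bar>Y x\<bar>}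
      \<le> ennreal K * (ennreal (t * exp (- t\<^sup>2 / (4 * s))) * indicator {0..} t)" for t
  proof (cases "t \<ge> 0")
    case True
    have "ennreal (l * sinh (l * t)) * emeasure N {x\<in>space N. t \<le> \<bar>Y x\<bar>}
        \<le> ennreal (l * sinh (l * t)) * ennreal (2 * exp (- t\<^sup>2 / (2 * s)))"
      by (intro mult_left_mono tail True) auto
    also have "\<dots> = ennreal (l * sinh (l * t) * (2 * exp (- t\<^sup>2 / (2 * s))))"
      using True l by (subst ennreal_mult) (auto simp: sinh_real_nonneg_iff)
    also have "\<dots> \<le> ennreal (K * (t * exp (- t\<^sup>2 / (4 * s))))"
      unfolding K_def by (intro ennreal_leI sinh_mult_gaussian_tail_le l s True)
    finally show ?thesis
      using True K by (simp add: ennreal_mult)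
  qed simp
  have "(\<integral>\<^sup>+x. ennreal (cosh (l * Y x)) \<partial>N)
      \<le> 1 + (\<integral>\<^sup>+t. ennreal K * (ennreal (t * exp (- t\<^sup>2 / (4 * s))) * indicator {0..} t) \<partial>lborel)"
    unfolding nn_integral_cosh_eq_tail_integral[OF N Y l]
    by (intro add_left_mono nn_integral_mono integrand_le)
  also have "\<dots> = 1 + ennreal K * ennreal (2 * s)"
    by (subst nn_integral_cmult) (measurable, simp only: nn_integral_mult_exp_neg_square[OF s])
  also have "\<dots> = ennreal (1 + K * (2 * s))"
    using K s ennreal_plus[of 1 "K * (2 * s)"] by (simp add: ennreal_mult)
  also have "\<dots> \<le> ennreal (exp (5 * l\<^sup>2 * s))"
    using one_plus_mult_exp_le_exp[of "l\<^sup>2 * s"] s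
    by (intro ennreal_leI) (simp add: K_def algebra_simps)
  finally show ?thesis .
qed

section \<open>Finite mixtures and their products\<close>

locale finite_mixture =
  fixes R :: "'a measure" and K :: "'l set" and \<alpha> :: "'l \<Rightarrow> real"
    and ms :: "'l \<Rightarrow> 'a measure" and mu :: "'a measure"
  assumes finite_labels: "finite K" and labels_nonempty: "K \<noteq> {}"
    and prob_space_component: "\<And>q. q \<in> K \<Longrightarrow> prob_space (ms q)"
    and sets_component: "\<And>q. q \<in> K \<Longrightarrow> sets (ms q) = sets R"
    and weight_nonneg: "\<And>q. q \<in> K \<Longrightarrow> \<alpha> q \<ge> 0"
    and prob_space_mixture: "prob_space mu"
    and sets_mixture: "sets mu = sets R"
    and measure_mixture: "\<And>A. A \<in> sets mu \<Longrightarrow> measure mu A = (\<Sum>q\<in>K. \<alpha> q * measure (ms q) A)"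
begin

lemma sum_weights: "(\<Sum>q\<in>K. \<alpha> q) = 1"
proof -
  have "space (ms q) = space mu" if "q \<in> K" for q
    using sets_component[OF that] sets_mixture by (intro sets_eq_imp_space_eq) simp
  then have "measure (ms q) (space mu) = 1" if "q \<in> K" for q
    using prob_space_component[OF that] that by (metis prob_space.prob_space)
  then show ?thesis
    using measure_mixture[of "space mu"] prob_space_mixture by (simp add: prob_space.prob_space)
qed

text \<open>The mixture is the Giry-monad bind of the weights (as a point measure) with the
  components.\<close>

lemma nn_integral_mixture:
  assumes h: "h \<in> borel_measurable R"
  shows "(\<integral>\<^sup>+x. h x \<partial>mu) = (\<Sum>q\<in>K. ennreal (\<alpha> q) * (\<integral>\<^sup>+x. h x \<partial>ms q))"
proof -
  define W where "W = point_measure K (\<lambda>q. ennreal (\<alpha> q))"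
  have space_W: "space W = K"
    by (simp add: W_def space_point_measure)
  have ms_measurable: "ms \<in> measurable W (subprob_algebra R)"
  proof (rule measurable_subprob_algebra)
    fix A assume "A \<in> sets R"
    show "(\<lambda>q. emeasure (ms q) A) \<in> borel_measurable W"
      by (simp add: W_def)
  qed (auto simp: space_W sets_component prob_space_component prob_space_imp_subprob_space)
  have mu_eq: "mu = W \<bind> ms"
  proof (rule measure_eqI)
    show "sets mu = sets (W \<bind> ms)"
      using labels_nonempty sets_bind[of W ms R] by (simp add: sets_mixture space_W sets_component)
  next
    fix A assume A: "A \<in> sets mu"
    have "emeasure (W \<bind> ms) A = (\<integral>\<^sup>+q. emeasure (ms q) A \<partial>W)"
      using A labels_nonempty sets_mixture by (intro emeasure_bind[OF _ ms_measurable]) (auto simp: space_W)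
    also have "\<dots> = (\<Sum>q\<in>K. ennreal (\<alpha> q) * emeasure (ms q) A)"
      using finite_labels by (simp add: W_def nn_integral_point_measure_finite)
    also have "\<dots> = (\<Sum>q\<in>K. ennreal (\<alpha> q * measure (ms q) A))"
      using weight_nonneg prob_space_component
      by (intro sum.cong refl)
         (simp add: finite_measure.emeasure_eq_measure[OF prob_space.axioms(1)] ennreal_mult)
    also have "\<dots> = emeasure mu A"
      using measure_mixture[OF A] prob_space_mixture weight_nonneg
      by (simp add: finite_measure.emeasure_eq_measure[OF prob_space.axioms(1)])
    finally show "emeasure mu A = emeasure (W \<bind> ms) A" ..
  qed
  have "(\<integral>\<^sup>+x. h x \<partial>mu) = (\<integral>\<^sup>+q. (\<integral>\<^sup>+x. h x \<partial>ms q) \<partial>W)"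
    unfolding mu_eq by (rule nn_integral_bind[OF h ms_measurable])
  then show ?thesis
    using finite_labels by (simp add: W_def nn_integral_point_measure_finite)
qed

end

lemma borel_measurable_nn_integral_fun_upd:
  assumes N: "prob_space N" "sets N = sets R"
    and h: "h \<in> borel_measurable (PiM (insert i I) (\<lambda>_. R))"
  shows "(\<lambda>x. \<integral>\<^sup>+y. h (x(i := y)) \<partial>N) \<in> borel_measurable (PiM I (\<lambda>_. R))"
proof -
  interpret prob_space N by (rule N(1))
  have "(\<lambda>(x, y). x(i := y)) \<in> measurable (PiM I (\<lambda>_. R) \<Otimes>\<^sub>M N) (PiM (insert i I) (\<lambda>_. R))"
    using measurable_add_dim[of i I "\<lambda>_. R"]
    by (simp add: measurable_cong_sets[OF sets_pair_measure_cong[OF refl N(2)] refl])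
  from measurable_compose[OF this h] show ?thesis
    by (intro borel_measurable_nn_integral) (simp add: case_prod_beta')
qed

lemma nn_integral_PiM_insert:
  assumes "finite I" "i \<notin> I"
    and M: "\<And>j. prob_space (M j)" "\<And>j. sets (M j) = sets R"
    and h: "h \<in> borel_measurable (PiM (insert i I) (\<lambda>_. R))"
  shows "(\<integral>\<^sup>+x. h x \<partial>PiM (insert i I) M) = (\<integral>\<^sup>+x. (\<integral>\<^sup>+y. h (x(i := y)) \<partial>M i) \<partial>PiM I M)"
proof -
  interpret product_sigma_finite M
    using M by (simp add: product_sigma_finite_def prob_space_imp_sigma_finite)
  have sets_eq: "sets (PiM (insert i I) M) = sets (PiM (insert i I) (\<lambda>_. R))"
    by (rule sets_PiM_cong) (auto simp: M)
  have "h \<in> borel_measurable (PiM (insert i I) M)"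
    unfolding measurable_cong_sets[OF sets_eq refl] by (rule h)
  then show ?thesis
    by (rule product_nn_integral_insert[OF assms(1,2)])
qed

context finite_mixture
begin

lemma nn_integral_PiM_fun_upd_labels:
  assumes "finite I" "i \<notin> I" "a \<in> K" "lab \<in> PiE I (\<lambda>_. K)"
    and h: "h \<in> borel_measurable (PiM (insert i I) (\<lambda>_. R))"
  shows "(\<integral>\<^sup>+x. h x \<partial>PiM (insert i I) (\<lambda>j. ms ((lab(i := a)) j)))
      = (\<integral>\<^sup>+x. (\<integral>\<^sup>+y. h (x(i := y)) \<partial>ms a) \<partial>PiM I (\<lambda>j. ms (lab j)))"
proof -
  obtain q0 where q0: "q0 \<in> K"
    using labels_nonempty by blast
  define M where "M j = ms (if j \<in> insert i I then (lab(i := a)) j else q0)" for j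
  have label_in: "(if j \<in> insert i I then (lab(i := a)) j else q0) \<in> K" for j
    using assms q0 by (auto simp: PiE_def Pi_def)
  have M_prob: "prob_space (M j)" and M_sets: "sets (M j) = sets R" for j
    unfolding M_def by (rule prob_space_component[OF label_in] sets_component[OF label_in])+
  have M_i: "M i = ms a"
    by (simp add: M_def)
  have "(\<integral>\<^sup>+x. h x \<partial>PiM (insert i I) M) = (\<integral>\<^sup>+x. (\<integral>\<^sup>+y. h (x(i := y)) \<partial>ms a) \<partial>PiM I M)"
    unfolding M_i[symmetric] by (rule nn_integral_PiM_insert[where M = M, OF assms(1,2) M_prob M_sets h])
  moreover have "PiM (insert i I) M = PiM (insert i I) (\<lambda>j. ms ((lab(i := a)) j))"
    "PiM I M = PiM I (\<lambda>j. ms (lab j))"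
    using assms(2) by (auto simp: M_def intro!: PiM_cong)
  ultimately show ?thesis
    by simp
qed

lemma nn_integral_PiM_mixture:
  assumes "finite I" and "h \<in> borel_measurable (PiM I (\<lambda>_. R))"
  shows "(\<integral>\<^sup>+x. h x \<partial>PiM I (\<lambda>_. mu)) =
    (\<Sum>lab\<in>PiE I (\<lambda>_. K). ennreal (\<Prod>j\<in>I. \<alpha> (lab j)) * (\<integral>\<^sup>+x. h x \<partial>PiM I (\<lambda>j. ms (lab j))))"
  using assms
proof (induction I arbitrary: h rule: finite_induct)
  case empty
  show ?case
    by (simp add: PiM_empty)
next
  case (insert i I)
  define H where "H a x = (\<integral>\<^sup>+y. h (x(i := y)) \<partial>ms a)" for a x
  have H_measurable: "H a \<in> borel_measurable (PiM I (\<lambda>_. R))" if "a \<in> K" for a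
    unfolding H_def using that insert.prems
    by (intro borel_measurable_nn_integral_fun_upd prob_space_component sets_component)
  have sets_PiM_mu: "sets (PiM J (\<lambda>_. mu)) = sets (PiM J (\<lambda>_. R))" for J
    by (rule sets_PiM_cong) (auto simp: sets_mixture)
  have insert_label: "(\<integral>\<^sup>+x. h x \<partial>PiM (insert i I) (\<lambda>j. ms ((lab(i := a)) j)))
      = (\<integral>\<^sup>+x. H a x \<partial>PiM I (\<lambda>j. ms (lab j)))" if "a \<in> K" "lab \<in> PiE I (\<lambda>_. K)" for a lab
    unfolding H_def using insert.hyps that insert.prems by (rule nn_integral_PiM_fun_upd_labels)
  have "(\<integral>\<^sup>+x. h x \<partial>PiM (insert i I) (\<lambda>_. mu)) = (\<integral>\<^sup>+x. (\<integral>\<^sup>+y. h (x(i := y)) \<partial>mu) \<partial>PiM I (\<lambda>_. mu))"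
    using insert.hyps insert.prems prob_space_mixture sets_mixture
    by (intro nn_integral_PiM_insert) auto
  also have "\<dots> = (\<integral>\<^sup>+x. (\<Sum>a\<in>K. ennreal (\<alpha> a) * H a x) \<partial>PiM I (\<lambda>_. mu))"
  proof (rule nn_integral_cong)
    fix x assume "x \<in> space (PiM I (\<lambda>_. mu))"
    then have "x \<in> space (PiM I (\<lambda>_. R))"
      using sets_eq_imp_space_eq[OF sets_PiM_mu[of I]] by simp
    then have "(\<lambda>y. x(i := y)) \<in> measurable R (PiM (insert i I) (\<lambda>_. R))"
      using measurable_component_update insert.hyps(2) by fastforce
    from measurable_compose[OF this insert.prems]
    show "(\<integral>\<^sup>+y. h (x(i := y)) \<partial>mu) = (\<Sum>a\<in>K. ennreal (\<alpha> a) * H a x)"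
      unfolding H_def by (rule nn_integral_mixture)
  qed
  also have "\<dots> = (\<Sum>a\<in>K. ennreal (\<alpha> a) * (\<integral>\<^sup>+x. H a x \<partial>PiM I (\<lambda>_. mu)))"
    using H_measurable
    by (subst nn_integral_sum) (auto simp: measurable_cong_sets[OF sets_PiM_mu refl]
        intro!: sum.cong nn_integral_cmult)
  also have "\<dots> = (\<Sum>a\<in>K. \<Sum>lab\<in>PiE I (\<lambda>_. K). ennreal (\<alpha> a) *
        (ennreal (\<Prod>j\<in>I. \<alpha> (lab j)) * (\<integral>\<^sup>+x. H a x \<partial>PiM I (\<lambda>j. ms (lab j)))))"
    using H_measurable by (simp add: insert.IH sum_distrib_left)
  also have "\<dots> = (\<Sum>(a, lab)\<in>K \<times> PiE I (\<lambda>_. K). ennreal (\<Prod>j\<in>insert i I. \<alpha> ((lab(i := a)) j))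
        * (\<integral>\<^sup>+x. h x \<partial>PiM (insert i I) (\<lambda>j. ms ((lab(i := a)) j))))"
  proof -
    have "(\<Prod>j\<in>insert i I. \<alpha> ((lab(i := a)) j)) = \<alpha> a * (\<Prod>j\<in>I. \<alpha> (lab j))" for a lab
      using insert.hyps by (auto intro!: prod.cong)
    moreover have "(\<Prod>j\<in>I. \<alpha> (lab j)) \<ge> 0" if "lab \<in> PiE I (\<lambda>_. K)" for lab
      using that weight_nonneg by (intro prod_nonneg) (auto simp: PiE_def Pi_def)
    ultimately have "ennreal (\<alpha> a) * (ennreal (\<Prod>j\<in>I. \<alpha> (lab j)) * (\<integral>\<^sup>+x. H a x \<partial>PiM I (\<lambda>j. ms (lab j))))
        = ennreal (\<Prod>j\<in>insert i I. \<alpha> ((lab(i := a)) j))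
          * (\<integral>\<^sup>+x. h x \<partial>PiM (insert i I) (\<lambda>j. ms ((lab(i := a)) j)))"
      if "a \<in> K" "lab \<in> PiE I (\<lambda>_. K)" for a lab
      using that weight_nonneg insert_label[OF that] by (simp add: ennreal_mult mult.assoc)
    then show ?thesis
      by (subst sum.cartesian_product[symmetric]) (auto intro!: sum.cong)
  qed
  also have "\<dots> = (\<Sum>lab\<in>PiE (insert i I) (\<lambda>_. K).
        ennreal (\<Prod>j\<in>insert i I. \<alpha> (lab j)) * (\<integral>\<^sup>+x. h x \<partial>PiM (insert i I) (\<lambda>j. ms (lab j))))"
    using insert.hyps
    by (intro sum.reindex_bij_witness[of _ "\<lambda>g. (g i, g(i := undefined))" "\<lambda>(a, lab). lab(i := a)"])
       (auto simp: PiE_def extensional_def)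
  finally show ?case .
qed

lemma nn_integral_PiM_mixture_le:
  assumes I: "finite I" and h: "h \<in> borel_measurable (PiM I (\<lambda>_. R))" and B: "B \<ge> 0"
    and component_le: "\<And>lab. lab \<in> PiE I (\<lambda>_. K) \<Longrightarrow> (\<integral>\<^sup>+x. h x \<partial>PiM I (\<lambda>j. ms (lab j))) \<le> ennreal B"
  shows "(\<integral>\<^sup>+x. h x \<partial>PiM I (\<lambda>_. mu)) \<le> ennreal B"
proof -
  have weights_nonneg: "(\<Prod>j\<in>I. \<alpha> (lab j)) \<ge> 0" if "lab \<in> PiE I (\<lambda>_. K)" for lab
    using that weight_nonneg by (intro prod_nonneg) (auto simp: PiE_def Pi_def)
  have "(\<Sum>lab\<in>PiE I (\<lambda>_. K). \<Prod>j\<in>I. \<alpha> (lab j)) = (\<Prod>j\<in>I. \<Sum>q\<in>K. \<alpha> q)"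
    using I finite_labels by (intro prod_sum_PiE[symmetric])
  then have weights_sum: "(\<Sum>lab\<in>PiE I (\<lambda>_. K). \<Prod>j\<in>I. \<alpha> (lab j)) = 1"
    by (simp add: sum_weights)
  have "(\<integral>\<^sup>+x. h x \<partial>PiM I (\<lambda>_. mu))
      \<le> (\<Sum>lab\<in>PiE I (\<lambda>_. K). ennreal (\<Prod>j\<in>I. \<alpha> (lab j)) * ennreal B)"
    unfolding nn_integral_PiM_mixture[OF I h] by (intro sum_mono mult_left_mono component_le) auto
  also have "\<dots> = ennreal B"
    using weights_nonneg B
    by (simp add: ennreal_mult[symmetric] sum_ennreal sum_distrib_right[symmetric] weights_sum)
  finally show ?thesis .
qed

end

lemma isoperimetricD:
  assumes "isoperimetric d c \<nu>"
  shows "prob_space \<nu>" "sets \<nu> = sets (Rd d)" "space \<nu> = space (Rd d)"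
  using assms sets_eq_imp_space_eq unfolding isoperimetric_def by auto

lemma isoperimetric_tail:
  assumes "isoperimetric d c \<nu>" "f \<in> borel_measurable (Rd d)" "\<forall>x\<in>space (Rd d). \<bar>f x\<bar> \<le> B"
    "L > 0" "lipschitz_Rd d L f" "t \<ge> 0"
  shows "measure \<nu> {x \<in> space \<nu>. t \<le> \<bar>f x - (\<integral>y. f y \<partial>\<nu>)\<bar>} \<le> 2 * exp (- (real d * t\<^sup>2) / (2 * c * L\<^sup>2))"
  using assms unfolding isoperimetric_def by blast

lemma (in prob_space) abs_integral_le_1:
  fixes f :: "'a \<Rightarrow> real"
  assumes "f \<in> borel_measurable M" "\<And>x. x \<in> space M \<Longrightarrow> \<bar>f x\<bar> \<le> 1"
  shows "\<bar>\<integral>x. f x \<partial>M\<bar> \<le> 1"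
proof -
  have bound: "AE x in M. \<bar>f x\<bar> \<le> 1"
    using assms(2) by simp
  have f: "integrable M f"
    by (rule integrable_const_bound[where B = 1]) (use bound assms(1) in auto)
  have "(\<integral>x. f x \<partial>M) \<le> 1" "-1 \<le> (\<integral>x. f x \<partial>M)"
    by (rule integral_le_const[OF f] integral_ge_const[OF f]; use bound in auto)+
  then show ?thesis
    by simp
qed

lemma isoperimetric_cosh_moment_le:
  assumes iso: "isoperimetric d c \<nu>" and d: "d \<ge> 1" and c: "c > 0" and L: "L > 0"
    and f: "f \<in> borel_measurable (Rd d)" "\<forall>x\<in>space (Rd d). \<bar>f x\<bar> \<le> 1" "lipschitz_Rd d L f"
    and l: "l > 0"
  shows "(\<integral>\<^sup>+y. ennreal (cosh (l * (f y - (\<integral>y. f y \<partial>\<nu>)))) \<partial>\<nu>)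
           \<le> ennreal (exp (5 * l\<^sup>2 * (c * L\<^sup>2 / real d)))"
proof (rule nn_integral_cosh_le_of_gaussian_tail[OF isoperimetricD(1)[OF iso] _ l])
  show "(\<lambda>y. f y - (\<integral>y. f y \<partial>\<nu>)) \<in> borel_measurable \<nu>"
    using f(1) by (simp add: measurable_cong_sets[OF isoperimetricD(2)[OF iso] refl])
  show "c * L\<^sup>2 / real d > 0"
    using c L d by simp
  fix t :: real
  assume "t \<ge> 0"
  from isoperimetric_tail[OF iso f(1,2) L f(3) this]
  show "emeasure \<nu> {y \<in> space \<nu>. t \<le> \<bar>f y - (\<integral>y. f y \<partial>\<nu>)\<bar>}
          \<le> ennreal (2 * exp (- t\<^sup>2 / (2 * (c * L\<^sup>2 / real d))))"
    using isoperimetricD(1)[OF iso] c L d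
    by (simp add: finite_measure.emeasure_eq_measure[OF prob_space.axioms(1)] field_simps)
qed

section \<open>The Rademacher average for fixed mixture labels\<close>

definition rademacher_max_avg :: "nat \<Rightarrow> ('a \<Rightarrow> real) set \<Rightarrow> (nat \<Rightarrow> 'a) \<Rightarrow> real" where
  "rademacher_max_avg n F xs =
     (\<Sum>\<sigma>\<in>sign_vectors n. Max ((\<lambda>f. \<bar>\<Sum>i<n. \<sigma> i * f (xs i)\<bar>) ` F)) / 2 ^ n"

lemma rad_eq_integral_rademacher_max_avg:
  "rad n \<mu> F = (1 / real n) * (\<integral>xs. rademacher_max_avg n F xs \<partial>PiM {..<n} (\<lambda>_. \<mu>))"
  unfolding rad_def rademacher_max_avg_def sign_vectors_def ..

lemma borel_measurable_rademacher_max_avg: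
  assumes "finite F" "\<And>f. f \<in> F \<Longrightarrow> f \<in> borel_measurable M"
  shows "rademacher_max_avg n F \<in> borel_measurable (PiM {..<n} (\<lambda>_. M))"
proof -
  have "(\<lambda>xs. f (xs i)) \<in> borel_measurable (PiM {..<n} (\<lambda>_. M))" if "f \<in> F" "i < n" for f i
    using measurable_compose[OF measurable_component_singleton[where i = i and I = "{..<n}" and M = "\<lambda>_. M"]
        assms(2)[OF that(1)]] that(2)
    by simp
  then show ?thesis
    unfolding rademacher_max_avg_def using assms(1)
    by (intro borel_measurable_divide borel_measurable_const borel_measurable_sum
        borel_measurable_Max borel_measurable_abs borel_measurable_times) auto
qed

text \<open>Replacing \<open>g f i\<close> by the class mean \<open>m (lab i) f\<close> of its label changes the Rademacher sum by
  \<open>\<Sum>\<^sub>q m q f \<Sum>\<^bsub>lab i = q\<^esub> \<sigma> i\<close>, which is bounded independently of \<open>f\<close>.\<close>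

lemma Max_abs_le_class_sums_plus_centred:
  fixes k :: nat and g :: "'f \<Rightarrow> nat \<Rightarrow> real" and m :: "nat \<Rightarrow> 'f \<Rightarrow> real"
  assumes F: "finite F" "F \<noteq> {}"
    and lab: "\<And>i. i < n \<Longrightarrow> lab i \<in> {1..k}"
    and m: "\<And>q f. q \<in> {1..k} \<Longrightarrow> f \<in> F \<Longrightarrow> \<bar>m q f\<bar> \<le> 1"
  shows "Max ((\<lambda>f. \<bar>\<Sum>i<n. \<sigma> i * g f i\<bar>) ` F)
     \<le> (\<Sum>q=1..k. \<bar>\<Sum>i<n. \<sigma> i * of_bool (lab i = q)\<bar>)
        + Max ((\<lambda>f. \<bar>\<Sum>i<n. \<sigma> i * (g f i - m (lab i) f)\<bar>) ` F)"
proof (subst Max_le_iff; (intro ballI)?)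
  fix y assume "y \<in> (\<lambda>f. \<bar>\<Sum>i<n. \<sigma> i * g f i\<bar>) ` F"
  then obtain f where f: "f \<in> F" and y: "y = \<bar>\<Sum>i<n. \<sigma> i * g f i\<bar>"
    by auto
  have "(\<Sum>i<n. \<sigma> i * m (lab i) f) = (\<Sum>i<n. \<Sum>q=1..k. m q f * (\<sigma> i * of_bool (lab i = q)))"
    using lab by (intro sum.cong refl) (simp add: of_bool_def if_distrib sum.delta' cong: if_cong)
  also have "\<dots> = (\<Sum>q=1..k. m q f * (\<Sum>i<n. \<sigma> i * of_bool (lab i = q)))"
    by (subst sum.swap) (simp only: sum_distrib_left)
  finally have "\<bar>\<Sum>i<n. \<sigma> i * m (lab i) f\<bar> \<le> (\<Sum>q=1..k. \<bar>m q f\<bar> * \<bar>\<Sum>i<n. \<sigma> i * of_bool (lab i = q)\<bar>)"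
    using sum_abs[of "\<lambda>q. m q f * (\<Sum>i<n. \<sigma> i * of_bool (lab i = q))" "{1..k}"]
    by (simp add: abs_mult)
  also have "\<dots> \<le> (\<Sum>q=1..k. \<bar>\<Sum>i<n. \<sigma> i * of_bool (lab i = q)\<bar>)"
    using m f by (intro sum_mono mult_left_le_one_le) auto
  finally have mean_part: "\<bar>\<Sum>i<n. \<sigma> i * m (lab i) f\<bar> \<le> (\<Sum>q=1..k. \<bar>\<Sum>i<n. \<sigma> i * of_bool (lab i = q)\<bar>)" .
  have centred_part: "\<bar>\<Sum>i<n. \<sigma> i * (g f i - m (lab i) f)\<bar>
      \<le> Max ((\<lambda>f. \<bar>\<Sum>i<n. \<sigma> i * (g f i - m (lab i) f)\<bar>) ` F)"
    using F f by (intro Max_ge) auto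
  have "(\<Sum>i<n. \<sigma> i * g f i) = (\<Sum>i<n. \<sigma> i * m (lab i) f) + (\<Sum>i<n. \<sigma> i * (g f i - m (lab i) f))"
    by (simp add: sum.distrib[symmetric] algebra_simps)
  with mean_part centred_part show "y \<le> (\<Sum>q=1..k. \<bar>\<Sum>i<n. \<sigma> i * of_bool (lab i = q)\<bar>)
      + Max ((\<lambda>f. \<bar>\<Sum>i<n. \<sigma> i * (g f i - m (lab i) f)\<bar>) ` F)"
    unfolding y by linarith
qed (use F in auto)

lemma rademacher_max_avg_le_centred:
  fixes k :: nat and m :: "nat \<Rightarrow> ('a \<Rightarrow> real) \<Rightarrow> real"
  assumes F: "finite F" "F \<noteq> {}"
    and lab: "\<And>i. i < n \<Longrightarrow> lab i \<in> {1..k}"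
    and m: "\<And>q f. q \<in> {1..k} \<Longrightarrow> f \<in> F \<Longrightarrow> \<bar>m q f\<bar> \<le> 1"
    and "n \<ge> 1" "k \<ge> 1" "l > 0" "W > 0"
  shows "rademacher_max_avg n F xs
     \<le> 2 * sqrt (real k * real n) + (ln W - 1) / l
        + 2 / (l * W) * (\<Sum>f\<in>F. \<Prod>i<n. cosh (l * (f (xs i) - m (lab i) f)))"
proof -
  let ?centred = "\<lambda>f i. f (xs i) - m (lab i) f"
  have "rademacher_max_avg n F xs
     \<le> (\<Sum>\<sigma>\<in>sign_vectors n. \<Sum>q=1..k. \<bar>\<Sum>i<n. \<sigma> i * of_bool (lab i = q)\<bar>) / 2 ^ n
        + (\<Sum>\<sigma>\<in>sign_vectors n. Max ((\<lambda>f. \<bar>\<Sum>i<n. \<sigma> i * ?centred f i\<bar>) ` F)) / 2 ^ n"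
    unfolding rademacher_max_avg_def add_divide_distrib[symmetric] sum.distrib[symmetric]
    by (intro divide_right_mono sum_mono Max_abs_le_class_sums_plus_centred[OF F lab m]) auto
  also have "\<dots> \<le> 2 * sqrt (real k * real n) + ((ln W - 1) / l
        + 2 * (\<Sum>f\<in>F. \<Prod>i<n. cosh (l * ?centred f i)) / (l * W))"
    using assms by (intro add_mono sum_sign_vectors_class_sums_le sum_sign_vectors_Max_abs_le) auto
  finally show ?thesis
    by simp
qed

text \<open>The dummy component \<open>\<mu>s 1\<close> outside \<open>{..<n}\<close> only serves to make the family of
  factors a product of probability spaces, so that the integral factorises.\<close>

lemma nn_integral_prod_cosh_le:
  fixes k :: nat
  assumes d: "d \<ge> 1" and c: "c > 0" and L: "L > 0" and k: "k \<ge> 1" and l: "l > 0"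
    and lab: "\<And>i. i < n \<Longrightarrow> lab i \<in> {1..k}"
    and iso: "\<And>q. q \<in> {1..k} \<Longrightarrow> isoperimetric d c (\<mu>s q)"
    and f: "f \<in> borel_measurable (Rd d)" "\<forall>x\<in>space (Rd d). \<bar>f x\<bar> \<le> 1" "lipschitz_Rd d L f"
  shows "(\<integral>\<^sup>+xs. (\<Prod>i<n. ennreal (cosh (l * (f (xs i) - (\<integral>y. f y \<partial>\<mu>s (lab i)))))) \<partial>PiM {..<n} (\<lambda>i. \<mu>s (lab i)))
     \<le> ennreal (exp (5 * l\<^sup>2 * (c * L\<^sup>2 / real d)) ^ n)"
proof -
  define M where "M i = \<mu>s (if i < n then lab i else 1)" for i
  have M_iso: "isoperimetric d c (M i)" for i
    unfolding M_def using lab k by (intro iso) auto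
  interpret product_sigma_finite M
    using isoperimetricD(1)[OF M_iso] by (simp add: product_sigma_finite_def prob_space_imp_sigma_finite)
  have f_M: "f \<in> borel_measurable (M i)" for i
    using f(1) by (simp add: measurable_cong_sets[OF isoperimetricD(2)[OF M_iso] refl])
  let ?h = "\<lambda>i y. ennreal (cosh (l * (f y - (\<integral>y. f y \<partial>M i))))"
  have "PiM {..<n} (\<lambda>i. \<mu>s (lab i)) = PiM {..<n} M"
    by (rule PiM_cong) (auto simp: M_def)
  moreover have "(\<Prod>i<n. ennreal (cosh (l * (f (xs i) - (\<integral>y. f y \<partial>\<mu>s (lab i)))))) = (\<Prod>i<n. ?h i (xs i))" for xs
    by (intro prod.cong) (auto simp: M_def)
  moreover have "(\<integral>\<^sup>+xs. (\<Prod>i<n. ?h i (xs i)) \<partial>PiM {..<n} M) = (\<Prod>i<n. \<integral>\<^sup>+y. ?h i y \<partial>M i)"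
    using f_M by (intro product_nn_integral_prod) auto
  ultimately have "(\<integral>\<^sup>+xs. (\<Prod>i<n. ennreal (cosh (l * (f (xs i) - (\<integral>y. f y \<partial>\<mu>s (lab i)))))) \<partial>PiM {..<n} (\<lambda>i. \<mu>s (lab i)))
      = (\<Prod>i<n. \<integral>\<^sup>+y. ?h i y \<partial>M i)"
    by simp
  also have "\<dots> \<le> (\<Prod>i<n. ennreal (exp (5 * l\<^sup>2 * (c * L\<^sup>2 / real d))))"
    by (intro prod_mono_ennreal isoperimetric_cosh_moment_le[OF M_iso d c L f l])
  finally show ?thesis
    by (simp add: ennreal_power)
qed

lemma borel_measurable_prod_cosh_centred:
  assumes "\<And>i. i < n \<Longrightarrow> f \<in> borel_measurable (M i)"
  shows "(\<lambda>xs. \<Prod>i<n. ennreal (cosh (l * (f (xs i) - m i)))) \<in> borel_measurable (PiM {..<n} M)"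
proof -
  have "(\<lambda>xs. f (xs i)) \<in> borel_measurable (PiM {..<n} M)" if "i < n" for i
    using measurable_compose[OF measurable_component_singleton[where i = i and I = "{..<n}" and M = M]
        assms[OF that]] that
    by simp
  then show ?thesis
    by (intro borel_measurable_prod_ennreal measurable_compose[OF _ measurable_ennreal]
        borel_measurable_cosh borel_measurable_times borel_measurable_diff borel_measurable_const) auto
qed

text \<open>The normalisation \<open>W\<close> of the log-sum-exp bound is chosen to cancel the total
  exponential moment \<open>|F| exp (5 l\<^sup>2 c L\<^sup>2 / d)\<^sup>n\<close>.\<close>

lemma nn_integral_rademacher_max_avg_le_temperature:
  fixes k :: nat and F :: "((nat \<Rightarrow> real) \<Rightarrow> real) set"
  assumes d: "d \<ge> 1" and c: "c > 0" and L: "L > 0" and n: "n \<ge> 1" and k: "k \<ge> 1" and l: "l > 0"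
    and lab: "\<And>i. i < n \<Longrightarrow> lab i \<in> {1..k}"
    and iso: "\<And>q. q \<in> {1..k} \<Longrightarrow> isoperimetric d c (\<mu>s q)"
    and F: "finite F" "card F \<ge> 2"
    and F_props: "\<And>f. f \<in> F \<Longrightarrow> f \<in> borel_measurable (Rd d) \<and> lipschitz_Rd d L f \<and>
                                   (\<forall>x\<in>space (Rd d). \<bar>f x\<bar> \<le> 1)"
  shows "(\<integral>\<^sup>+xs. ennreal (rademacher_max_avg n F xs) \<partial>PiM {..<n} (\<lambda>i. \<mu>s (lab i)))
     \<le> ennreal (2 * sqrt (real k * real n)
                + (ln (2 * real (card F)) + 5 * real n * l\<^sup>2 * (c * L\<^sup>2 / real d)) / l)"
proof -
  define E where "E = exp (5 * l\<^sup>2 * (c * L\<^sup>2 / real d))"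
  define W where "W = 2 * real (card F) * E ^ n"
  define m where "m q f = (\<integral>y. f y \<partial>\<mu>s q)" for q and f :: "(nat \<Rightarrow> real) \<Rightarrow> real"
  define H where "H f xs = (\<Prod>i<n. ennreal (cosh (l * (f (xs i) - m (lab i) f))))" for f xs
  define C where "C = 2 * sqrt (real k * real n) + (ln W - 1) / l"
  let ?P = "PiM {..<n} (\<lambda>i. \<mu>s (lab i))"
  have "F \<noteq> {}"
    using F by auto
  have E: "E \<ge> 1"
    using c L by (simp add: E_def)
  then have "real (card F) * E ^ n \<ge> 2 * 1"
    using F by (intro mult_mono one_le_power) auto
  then have W: "W \<ge> 4"
    by (simp add: W_def)
  then have W_pos: "W > 0" and ln_W: "ln W \<ge> 1"
    using exp_le by (simp_all add: ln_ge_iff)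
  have C: "C \<ge> 0"
    using ln_W l by (simp add: C_def)
  have m: "\<bar>m q f\<bar> \<le> 1" if "q \<in> {1..k}" "f \<in> F" for q f
    unfolding m_def using isoperimetricD[OF iso[OF that(1)]] F_props[OF that(2)]
    by (intro prob_space.abs_integral_le_1)
       (auto simp: measurable_cong_sets[OF isoperimetricD(2)[OF iso[OF that(1)]] refl])
  have pointwise: "ennreal (rademacher_max_avg n F xs) \<le> ennreal C + ennreal (2 / (l * W)) * (\<Sum>f\<in>F. H f xs)"
    for xs
    using ennreal_leI[OF rademacher_max_avg_le_centred[OF F(1) \<open>F \<noteq> {}\<close> lab m n k l W_pos]] C l W_pos
    by (simp add: C_def H_def ennreal_plus[symmetric] ennreal_mult[symmetric] prod_ennreal sum_ennreal
        sum_nonneg prod_nonneg del: ennreal_plus ennreal_mult')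
  interpret product: prob_space ?P
    using isoperimetricD(1)[OF iso] lab by (intro prob_space_PiM) auto
  have H_measurable: "H f \<in> borel_measurable ?P" if "f \<in> F" for f
    unfolding H_def using F_props[OF that] lab
    by (intro borel_measurable_prod_cosh_centred)
       (simp add: measurable_cong_sets[OF isoperimetricD(2)[OF iso] refl])
  have H_integral: "(\<integral>\<^sup>+xs. H f xs \<partial>?P) \<le> ennreal (E ^ n)" if "f \<in> F" for f
    unfolding H_def m_def E_def using F_props[OF that]
    by (intro nn_integral_prod_cosh_le[OF d c L k l lab iso]) auto
  have "(\<integral>\<^sup>+xs. ennreal (rademacher_max_avg n F xs) \<partial>?P)
      \<le> (\<integral>\<^sup>+xs. ennreal C + ennreal (2 / (l * W)) * (\<Sum>f\<in>F. H f xs) \<partial>?P)"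
    by (intro nn_integral_mono pointwise)
  also have "\<dots> = ennreal C + ennreal (2 / (l * W)) * (\<Sum>f\<in>F. \<integral>\<^sup>+xs. H f xs \<partial>?P)"
    using H_measurable
    by (simp add: nn_integral_add nn_integral_cmult nn_integral_sum product.emeasure_space_1)
  also have "\<dots> \<le> ennreal C + ennreal (2 / (l * W)) * (\<Sum>f\<in>F. ennreal (E ^ n))"
    by (intro add_left_mono mult_left_mono sum_mono H_integral) auto
  also have "\<dots> = ennreal C + ennreal (2 / (l * W)) * ennreal (real (card F) * E ^ n)"
    using E by (simp add: ennreal_mult ennreal_of_nat_eq_real_of_nat)
  also have "\<dots> = ennreal (C + 2 / (l * W) * (real (card F) * E ^ n))"
    using C l W_pos E by (simp add: ennreal_mult[symmetric] ennreal_plus[symmetric] del: ennreal_plus)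
  also have "2 / (l * W) * (real (card F) * E ^ n) = 1 / l"
    using E \<open>F \<noteq> {}\<close> F l by (simp add: W_def)
  also have "C + 1 / l = 2 * sqrt (real k * real n)
      + (ln (2 * real (card F)) + 5 * real n * l\<^sup>2 * (c * L\<^sup>2 / real d)) / l"
    using E \<open>F \<noteq> {}\<close> F
    by (simp add: C_def W_def E_def ln_mult ln_realpow diff_divide_distrib add_divide_distrib)
  finally show ?thesis .
qed

lemma nn_integral_rademacher_max_avg_le_optimal_temperature:
  fixes k :: nat and F :: "((nat \<Rightarrow> real) \<Rightarrow> real) set"
  assumes d: "d \<ge> 1" and c: "c > 0" and L: "L > 0" and n: "n \<ge> 1" and k: "k \<ge> 1"
    and lab: "\<And>i. i < n \<Longrightarrow> lab i \<in> {1..k}"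
    and iso: "\<And>q. q \<in> {1..k} \<Longrightarrow> isoperimetric d c (\<mu>s q)"
    and F: "finite F" "card F \<ge> 2"
    and F_props: "\<And>f. f \<in> F \<Longrightarrow> f \<in> borel_measurable (Rd d) \<and> lipschitz_Rd d L f \<and>
                                   (\<forall>x\<in>space (Rd d). \<bar>f x\<bar> \<le> 1)"
  shows "(\<integral>\<^sup>+xs. ennreal (rademacher_max_avg n F xs) \<partial>PiM {..<n} (\<lambda>i. \<mu>s (lab i)))
     \<le> ennreal (2 * sqrt (real k * real n) + 7 * sqrt (real n * (c * L\<^sup>2 / real d) * ln (real (card F))))"
proof -
  define s where "s = c * L\<^sup>2 / real d"
  define N where "N = real (card F)"
  have s: "s > 0" and N: "N \<ge> 2"
    using c L d F by (simp_all add: s_def N_def)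
  then have ln_N: "ln N > 0"
    by simp
  define l where "l = sqrt (ln N / (real n * s))"
  have l: "l > 0" and l_square: "real n * l\<^sup>2 * s = ln N"
    using ln_N n s by (simp_all add: l_def)
  have "(ln N / l)\<^sup>2 = real n * s * ln N"
    using l by (simp add: l_square[symmetric] power_divide power2_eq_square field_simps)
  then have "ln N / l = sqrt (real n * s * ln N)"
    using l ln_N by (intro real_sqrt_unique[symmetric]) auto
  moreover have "ln (2 * N) + 5 * real n * l\<^sup>2 * s \<le> 7 * ln N"
  proof -
    have "ln 2 \<le> ln N"
      using N by simp
    moreover have "5 * real n * l\<^sup>2 * s = 5 * ln N"
      by (simp add: l_square[symmetric])
    moreover have "ln (2 * N) = ln 2 + ln N"
      using N by (simp add: ln_mult)
    ultimately show ?thesis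
      by linarith
  qed
  ultimately have rate: "(ln (2 * N) + 5 * real n * l\<^sup>2 * s) / l \<le> 7 * sqrt (real n * s * ln N)"
    using l by (metis divide_right_mono less_eq_real_def times_divide_eq_right)
  have "(\<integral>\<^sup>+xs. ennreal (rademacher_max_avg n F xs) \<partial>PiM {..<n} (\<lambda>i. \<mu>s (lab i)))
     \<le> ennreal (2 * sqrt (real k * real n) + (ln (2 * N) + 5 * real n * l\<^sup>2 * s) / l)"
    unfolding s_def N_def
    by (rule nn_integral_rademacher_max_avg_le_temperature[OF d c L n k l lab iso F F_props])
  also have "\<dots> \<le> ennreal (2 * sqrt (real k * real n) + 7 * sqrt (real n * s * ln N))"
    using rate by (intro ennreal_leI add_left_mono)
  finally show ?thesis
    by (simp add: s_def N_def)
qed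

lemma rademacher_max_avg_le_sqrt:
  fixes F :: "('a \<Rightarrow> real) set"
  assumes n: "n \<ge> 1" and F: "finite F" "F \<noteq> {}"
    and xs: "\<And>i. i < n \<Longrightarrow> xs i \<in> S"
    and bounded: "\<And>f x. f \<in> F \<Longrightarrow> x \<in> S \<Longrightarrow> \<bar>f x\<bar> \<le> 1"
    and degenerate: "card F = 1 \<or> (\<forall>f\<in>F. \<forall>x\<in>S. \<forall>y\<in>S. f x = f y)"
  shows "rademacher_max_avg n F xs \<le> 2 * sqrt (real n)"
proof (cases "card F = 1")
  case True
  then obtain f where F_eq: "F = {f}"
    by (auto simp: card_Suc_eq)
  have "(\<Sum>i<n. (f (xs i))\<^sup>2) \<le> (\<Sum>i<n. 1)"
    using bounded xs F_eq by (intro sum_mono) (auto simp: abs_square_le_1)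
  then show ?thesis
    using sum_sign_vectors_abs_le_sqrt[OF n, of "\<lambda>i. f (xs i)"]
    by (simp add: F_eq rademacher_max_avg_def)
next
  case False
  with degenerate have is_constant: "\<forall>f\<in>F. \<forall>x\<in>S. \<forall>y\<in>S. f x = f y"
    by simp
  have x0: "xs 0 \<in> S"
    using xs n by simp
  have "Max ((\<lambda>f. \<bar>\<Sum>i<n. \<sigma> i * f (xs i)\<bar>) ` F) \<le> \<bar>\<Sum>i<n. \<sigma> i * 1\<bar>" for \<sigma>
  proof (subst Max_le_iff; (intro ballI)?)
    fix y assume "y \<in> (\<lambda>f. \<bar>\<Sum>i<n. \<sigma> i * f (xs i)\<bar>) ` F"
    then obtain f where f: "f \<in> F" and y: "y = \<bar>\<Sum>i<n. \<sigma> i * f (xs i)\<bar>"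
      by auto
    have "(\<Sum>i<n. \<sigma> i * f (xs i)) = (\<Sum>i<n. \<sigma> i * f (xs 0))"
      using is_constant f xs x0 by (intro sum.cong) auto
    then have "(\<Sum>i<n. \<sigma> i * f (xs i)) = f (xs 0) * (\<Sum>i<n. \<sigma> i)"
      by (simp add: sum_distrib_left mult.commute)
    then show "y \<le> \<bar>\<Sum>i<n. \<sigma> i * 1\<bar>"
      using bounded[OF f x0] by (simp add: y abs_mult mult_left_le_one_le)
  qed (use F in auto)
  then have "rademacher_max_avg n F xs \<le> (\<Sum>\<sigma>\<in>sign_vectors n. \<bar>\<Sum>i<n. \<sigma> i * 1\<bar>) / 2 ^ n"
    unfolding rademacher_max_avg_def by (intro divide_right_mono sum_mono) auto
  also have "\<dots> \<le> 2 * sqrt (real n)"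
    by (rule sum_sign_vectors_abs_le_sqrt[OF n]) simp
  finally show ?thesis .
qed

lemma nn_integral_rademacher_max_avg_le_sqrt:
  fixes F :: "('a \<Rightarrow> real) set"
  assumes n: "n \<ge> 1" and F: "finite F" "F \<noteq> {}"
    and M: "\<And>i. i < n \<Longrightarrow> prob_space (M i)" "\<And>i. i < n \<Longrightarrow> space (M i) = S"
    and bounded: "\<And>f x. f \<in> F \<Longrightarrow> x \<in> S \<Longrightarrow> \<bar>f x\<bar> \<le> 1"
    and degenerate: "card F = 1 \<or> (\<forall>f\<in>F. \<forall>x\<in>S. \<forall>y\<in>S. f x = f y)"
  shows "(\<integral>\<^sup>+xs. ennreal (rademacher_max_avg n F xs) \<partial>PiM {..<n} M) \<le> ennreal (2 * sqrt (real n))"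
proof -
  interpret prob_space "PiM {..<n} M"
    using M(1) by (intro prob_space_PiM) auto
  have "rademacher_max_avg n F xs \<le> 2 * sqrt (real n)" if "xs \<in> space (PiM {..<n} M)" for xs
  proof (rule rademacher_max_avg_le_sqrt[OF n F])
    show "xs i \<in> S" if "i < n" for i
      using \<open>xs \<in> _\<close> that M(2) by (auto simp: space_PiM)
  qed (use bounded degenerate in auto)
  then have "(\<integral>\<^sup>+xs. ennreal (rademacher_max_avg n F xs) \<partial>PiM {..<n} M)
      \<le> (\<integral>\<^sup>+xs. ennreal (2 * sqrt (real n)) \<partial>PiM {..<n} M)"
    by (intro nn_integral_mono ennreal_leI)
  then show ?thesis
    by (simp add: emeasure_space_1)
qed

lemma sqrt_rates_le_max:
  assumes "n \<ge> 1" "d \<ge> 1" "c > 0" "L \<ge> 0" "ln N \<ge> 0"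
  shows "2 * sqrt (real k * real n) + 7 * sqrt (real n * (c * L\<^sup>2 / real d) * ln N)
    \<le> 9 * (real n * max (sqrt (real k / real n)) (L * sqrt (c * ln N / (real n * real d))))"
proof -
  let ?T = "max (sqrt (real k / real n)) (L * sqrt (c * ln N / (real n * real d)))"
  have "sqrt (real k * real n) = real n * sqrt (real k / real n)"
    using assms by (simp add: real_sqrt_divide real_sqrt_mult field_simps)
  moreover have "sqrt (real n * (c * L\<^sup>2 / real d) * ln N) = real n * (L * sqrt (c * ln N / (real n * real d)))"
  proof -
    have "real n * (c * L\<^sup>2 / real d) * ln N = (real n * L)\<^sup>2 * (c * ln N / (real n * real d))"
      using assms by (simp add: power2_eq_square field_simps)
    then have "sqrt (real n * (c * L\<^sup>2 / real d) * ln N)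
        = sqrt ((real n * L)\<^sup>2) * sqrt (c * ln N / (real n * real d))"
      by (simp only: real_sqrt_mult)
    then show ?thesis
      using assms by simp
  qed
  moreover have "real n * sqrt (real k / real n) \<le> real n * ?T"
    "real n * (L * sqrt (c * ln N / (real n * real d))) \<le> real n * ?T"
    by (intro mult_left_mono; simp)+
  ultimately show ?thesis
    by linarith
qed

lemma nn_integral_rademacher_max_avg_le:
  fixes k :: nat and F :: "((nat \<Rightarrow> real) \<Rightarrow> real) set"
  assumes d: "d \<ge> 1" and c: "c > 0" and L: "L \<ge> 0" and n: "n \<ge> 1" and k: "k \<ge> 1"
    and lab: "\<And>i. i < n \<Longrightarrow> lab i \<in> {1..k}"
    and iso: "\<And>q. q \<in> {1..k} \<Longrightarrow> isoperimetric d c (\<mu>s q)"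
    and F: "finite F" "F \<noteq> {}"
    and F_props: "\<And>f. f \<in> F \<Longrightarrow> f \<in> borel_measurable (Rd d) \<and> lipschitz_Rd d L f \<and>
                                   (\<forall>x\<in>space (Rd d). \<bar>f x\<bar> \<le> 1)"
  shows "(\<integral>\<^sup>+xs. ennreal (rademacher_max_avg n F xs) \<partial>PiM {..<n} (\<lambda>i. \<mu>s (lab i)))
     \<le> ennreal (2 * sqrt (real k * real n) + 7 * sqrt (real n * (c * L\<^sup>2 / real d) * ln (real (card F))))"
proof (cases "card F = 1 \<or> L = 0")
  case True
  have "L = 0 \<Longrightarrow> f x = f y" if "f \<in> F" "x \<in> space (Rd d)" "y \<in> space (Rd d)" for f x y
    using F_props[OF that(1)] that(2,3) unfolding lipschitz_Rd_def by fastforce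
  then have "card F = 1 \<or> (\<forall>f\<in>F. \<forall>x\<in>space (Rd d). \<forall>y\<in>space (Rd d). f x = f y)"
    using True by blast
  then have "(\<integral>\<^sup>+xs. ennreal (rademacher_max_avg n F xs) \<partial>PiM {..<n} (\<lambda>i. \<mu>s (lab i)))
      \<le> ennreal (2 * sqrt (real n))"
    using F_props lab isoperimetricD(1,3)[OF iso]
    by (intro nn_integral_rademacher_max_avg_le_sqrt[OF n F]) auto
  also have "\<dots> \<le> ennreal (2 * sqrt (real k * real n) + 7 * sqrt (real n * (c * L\<^sup>2 / real d) * ln (real (card F))))"
  proof (rule ennreal_leI)
    have "sqrt (real n) \<le> sqrt (real k * real n)"
      using k by (intro real_sqrt_le_mono) (simp add: mult_le_cancel_right1)
    moreover have "0 \<le> ln (real (card F))"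
      using F by (simp add: Suc_le_eq card_gt_0_iff)
    ultimately show "2 * sqrt (real n) \<le> 2 * sqrt (real k * real n)
        + 7 * sqrt (real n * (c * L\<^sup>2 / real d) * ln (real (card F)))"
      using c by (simp add: add_increasing2)
  qed
  finally show ?thesis .
next
  case False
  moreover have "card F > 0"
    using F by (simp add: card_gt_0_iff)
  ultimately have "card F \<ge> 2" "L > 0"
    using L by auto
  then show ?thesis
    by (intro nn_integral_rademacher_max_avg_le_optimal_temperature[OF d c _ n k lab iso F(1) _ F_props])
qed

lemma rad_mixture_le:
  fixes k :: nat and F :: "((nat \<Rightarrow> real) \<Rightarrow> real) set"
  assumes mixture: "finite_mixture (Rd d) {1..k} \<alpha> \<mu>s \<mu>"
    and d: "d \<ge> 1" and c: "c > 0" and L: "L \<ge> 0" and n: "n \<ge> 1" and k: "k \<ge> 1"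
    and iso: "\<And>q. q \<in> {1..k} \<Longrightarrow> isoperimetric d c (\<mu>s q)"
    and F: "finite F" "F \<noteq> {}"
    and F_props: "\<And>f. f \<in> F \<Longrightarrow> f \<in> borel_measurable (Rd d) \<and> lipschitz_Rd d L f \<and>
                                   (\<forall>x\<in>space (Rd d). \<bar>f x\<bar> \<le> 1)"
  shows "rad n \<mu> F \<le> 9 * max (sqrt (real k / real n)) (L * sqrt (c * ln (real (card F)) / (real n * real d)))"
proof -
  interpret finite_mixture "Rd d" "{1..k}" \<alpha> \<mu>s \<mu>
    by (fact mixture)
  define B where "B = 2 * sqrt (real k * real n) + 7 * sqrt (real n * (c * L\<^sup>2 / real d) * ln (real (card F)))"
  have ln_card: "ln (real (card F)) \<ge> 0"
    using F by (simp add: Suc_le_eq card_gt_0_iff)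
  then have B: "B \<ge> 0"
    using c by (simp add: B_def)
  have "(\<lambda>xs. ennreal (rademacher_max_avg n F xs)) \<in> borel_measurable (PiM {..<n} (\<lambda>_. Rd d))"
    using F_props
    by (intro measurable_compose[OF _ measurable_ennreal] borel_measurable_rademacher_max_avg F(1)) auto
  moreover have "(\<integral>\<^sup>+xs. ennreal (rademacher_max_avg n F xs) \<partial>PiM {..<n} (\<lambda>i. \<mu>s (lab i))) \<le> ennreal B"
    if "lab \<in> PiE {..<n} (\<lambda>_. {1..k})" for lab
    unfolding B_def using PiE_mem[OF that]
    by (intro nn_integral_rademacher_max_avg_le[OF d c L n k _ iso F F_props]) simp
  ultimately have "(\<integral>\<^sup>+xs. ennreal (rademacher_max_avg n F xs) \<partial>PiM {..<n} (\<lambda>_. \<mu>)) \<le> ennreal B"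
    using B by (intro nn_integral_PiM_mixture_le) auto
  then have "(\<integral>xs. rademacher_max_avg n F xs \<partial>PiM {..<n} (\<lambda>_. \<mu>)) \<le> B"
    using B by (intro integral_real_bounded)
  also have "B \<le> 9 * (real n * max (sqrt (real k / real n)) (L * sqrt (c * ln (real (card F)) / (real n * real d))))"
    unfolding B_def using n d c L ln_card by (rule sqrt_rates_le_max)
  finally show ?thesis
    using n by (simp add: rad_eq_integral_rademacher_max_avg field_simps)
qed

theorem mainTheorem7:
  "\<exists>C::real. \<forall>(d::nat) (k::nat) (n::nat) (c::real) (L::real)
      (\<alpha>::nat \<Rightarrow> real) (\<mu>s::nat \<Rightarrow> (nat \<Rightarrow> real) measure) (\<mu>::(nat \<Rightarrow> real) measure)
      (F::((nat \<Rightarrow> real) \<Rightarrow> real) set).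
     d \<ge> 1 \<and> k \<ge> 1 \<and> n \<ge> 1 \<and> c > 0 \<and> L \<ge> 0 \<and>
     (\<forall>l\<in>{1..k}. \<alpha> l \<ge> 0) \<and> (\<Sum>l=1..k. \<alpha> l) = 1 \<and>
     (\<forall>l\<in>{1..k}. isoperimetric d c (\<mu>s l)) \<and>
     prob_space \<mu> \<and> sets \<mu> = sets (Rd d) \<and>
     (\<forall>A\<in>sets \<mu>. measure \<mu> A = (\<Sum>l=1..k. \<alpha> l * measure (\<mu>s l) A)) \<and>
     finite F \<and> F \<noteq> {} \<and>
     (\<forall>f\<in>F. f \<in> borel_measurable (Rd d) \<and> lipschitz_Rd d L f \<and>
              (\<forall>x\<in>space (Rd d). \<bar>f x\<bar> \<le> 1))
     \<longrightarrow> rad n \<mu> F \<le> C * max (sqrt (real k / real n))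
                             (L * sqrt (c * ln (real (card F)) / (real n * real d)))"
proof (intro exI[of _ 9] allI impI, elim conjE)
  fix d k n :: nat and c L :: real and \<alpha> :: "nat \<Rightarrow> real"
    and \<mu>s :: "nat \<Rightarrow> (nat \<Rightarrow> real) measure" and \<mu> :: "(nat \<Rightarrow> real) measure"
    and F :: "((nat \<Rightarrow> real) \<Rightarrow> real) set"
  assume hyps: "d \<ge> 1" "k \<ge> 1" "n \<ge> 1" "c > 0" "L \<ge> 0" "\<forall>l\<in>{1..k}. \<alpha> l \<ge> 0"
    "\<forall>l\<in>{1..k}. isoperimetric d c (\<mu>s l)" "prob_space \<mu>" "sets \<mu> = sets (Rd d)"
    "\<forall>A\<in>sets \<mu>. measure \<mu> A = (\<Sum>l=1..k. \<alpha> l * measure (\<mu>s l) A)"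
    "finite F" "F \<noteq> {}"
    "\<forall>f\<in>F. f \<in> borel_measurable (Rd d) \<and> lipschitz_Rd d L f \<and> (\<forall>x\<in>space (Rd d). \<bar>f x\<bar> \<le> 1)"
  have iso: "\<And>q. q \<in> {1..k} \<Longrightarrow> isoperimetric d c (\<mu>s q)"
    using hyps by blast
  have "finite_mixture (Rd d) {1..k} \<alpha> \<mu>s \<mu>"
    using hyps isoperimetricD(1,2)[OF iso] by (auto simp: finite_mixture_def)
  with hyps show "rad n \<mu> F \<le> 9 * max (sqrt (real k / real n))
                             (L * sqrt (c * ln (real (card F)) / (real n * real d)))"
    by (intro rad_mixture_le) auto
qed

end
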